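(* Let $q$ be a prime power and let $C_2\subsetneq C_1\subseteq\mathbf{F}_q^n$ be $\mathbf{F}_q$-linear codes with $\dim C_1-\dim C_2=L$. Fix an $\mathbf{F}_q$-linear isomorphism $f:\mathbf{F}_q^L\to C_1/C_2$ (so each $f(\vec{s})$ is a coset of $C_2$ in $C_1$, viewed as a subset of $C_1$). Consider the quantum ramp secret sharing scheme which encodes each basis state $|\vec{s}\rangle\in\bigotimes_{i=1}^L\mathcal{G}_i$, $\vec{s}\in\mathbf{F}_q^L$, to \[ \frac{1}{\sqrt{|C_2|}}\sum_{\vec{x}\in f(\vec{s})}|\vec{x}\rangle\in\bigotimes_{j=1}^n\mathcal{H}_j, \] extended complex-linearly, with $\mathcal{H}_j$ being the $j$-th share. Let $I\subseteq\{1,\ldots,L\}$, $\overline{I}=\{1,\ldots,L\}\setminus I$, $J\subseteq\{1,\ldots,n\}$, $\overline{J}=\{1,\ldots,n\}\setminus J$, and define the codes in $\mathbf{F}_q^{n+|\overline{I}|}$ \[ C'_1=\{(\vec{x},P_{\overline{I}}(\vec{s})) : \vec{s}\in\mathbf{F}_q^L,\ \vec{x}\in f(\vec{s})\},\qquad C'_2=\{(\vec{x},P_{\overline{I}}(\vec{s})) : \vec{s}\in\mathbf{F}_q^L,\ P_I(\vec{s})=\vec{0},\ \vec{x}\in f(\vec{s})\}. \] Then the scheme is strongly secure with respect to $I$ and $J$ if and only if \[ \dim P_J(C'_1)-\dim P_J(C'_2)=0 \] and \[ \dim P_{\overline{J}\cup\{n+1,\ldots,n+|\overline{I}|\}}(C'_1)-\dim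 P_{\overline{J}\cup\{n+1,\ldots,n+|\overline{I}|\}}(C'_2)=|I|. \]
   Context: All $\mathcal{G}_i$ ($i=1,\ldots,L$) and $\mathcal{H}_j$ ($j=1,\ldots,n$) are $q$-dimensional complex Hilbert spaces with orthonormal basis $\{|a\rangle : a\in\mathbf{F}_q\}$; for $\vec{x}\in\mathbf{F}_q^n$, $|\vec{x}\rangle=|x_1\rangle\otimes\cdots\otimes|x_n\rangle$. For an index set $K$ and a vector $\vec{v}$, $P_K(\vec{v})=(v_k)_{k\in K}$ is the projection (puncturing) onto the coordinates in $K$; for a code $C$, $P_K(C)=\{P_K(\vec{v}):\vec{v}\in C\}$. In $C'_1,C'_2$ the first $n$ coordinates are those of $\vec{x}$ and coordinates $n+1,\ldots,n+|\overline{I}|$ are those of $P_{\overline{I}}(\vec{s})$. For $I\subseteq\{1,\ldots,L\}$ let $\mathcal{G}_I=\bigotimes_{i\in I}\mathcal{G}_i$ and $\mathcal{G}_{\overline{I}}=\bigotimes_{i\in\overline{I}}\mathcal{G}_i$. Definition (strong security): the scheme is strongly secure with respect to $I$ and $J$ if the quantum state $\sigma_J$ of the shares in $\bigotimes_{j\in J}\mathcal{H}_j$ (the reduced state of the encoded secret) is always the same state regardless of $\rho_I$, when the whole quantum secret is in the state $\rho_I\otimes\rho_{\overline{I},\mathrm{mix}}$, where $\rho_I$ is an arbitrary state on $\mathcal{G}_I$ and $\rho_{\overline{I},\mathrm{mix}}$ is the fully mixed state on $\mathcal{G}_{\overline{I}}$. *)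

theory Defs
  imports Complex_Main "HOL-Library.Function_Algebras"
begin

text \<open>Vectors over the finite field are functions nat => 'a; F_q^m is the set of
  functions vanishing outside an index set (coordinates are 0-based).\<close>

definition fscale :: "'a::field \<Rightarrow> (nat \<Rightarrow> 'a) \<Rightarrow> (nat \<Rightarrow> 'a)" where
  "fscale c v = (\<lambda>i. c * v i)"

global_interpretation fvec: vector_space "fscale :: 'a::field \<Rightarrow> (nat \<Rightarrow> 'a) \<Rightarrow> (nat \<Rightarrow> 'a)"
  by unfold_locales (auto simp: fscale_def algebra_simps fun_eq_iff)

definition lab :: "nat set \<Rightarrow> (nat \<Rightarrow> 'a::zero) set" where
  "lab K = {v. \<forall>i. i \<notin> K \<longrightarrow> v i = 0}"

definition proj :: "nat set \<Rightarrow> (nat \<Rightarrow> 'a::zero) \<Rightarrow> (nat \<Rightarrow> 'a)" where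
  "proj K v = (\<lambda>i. if i \<in> K then v i else 0)"

definition proj_code :: "nat set \<Rightarrow> (nat \<Rightarrow> 'a::zero) set \<Rightarrow> (nat \<Rightarrow> 'a) set" where
  "proj_code K C = proj K ` C"

definition coset :: "(nat \<Rightarrow> 'a::plus) set \<Rightarrow> (nat \<Rightarrow> 'a) \<Rightarrow> (nat \<Rightarrow> 'a) set" where
  "coset C2 x = (\<lambda>c. x + c) ` C2"

definition quotient_iso ::
  "nat \<Rightarrow> (nat \<Rightarrow> 'a::field) set \<Rightarrow> (nat \<Rightarrow> 'a) set \<Rightarrow> ((nat \<Rightarrow> 'a) \<Rightarrow> (nat \<Rightarrow> 'a) set) \<Rightarrow> bool" where
  "quotient_iso L C1 C2 f \<longleftrightarrow>
     (\<forall>s\<in>lab {..<L}. \<exists>x\<in>C1. f s = coset C2 x) \<and>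
     (\<forall>s\<in>lab {..<L}. \<forall>t\<in>lab {..<L}. f (s + t) = {x + y | x y. x \<in> f s \<and> y \<in> f t}) \<and>
     (\<forall>c. \<forall>s\<in>lab {..<L}. \<forall>x\<in>f s. f (fscale c s) = coset C2 (fscale c x)) \<and>
     inj_on f (lab {..<L}) \<and>
     (\<forall>x\<in>C1. \<exists>s\<in>lab {..<L}. x \<in> f s)"

text \<open>Operators on the subsystem with basis labels lab K: matrices indexed by labels.\<close>
type_synonym 'a op = "(nat \<Rightarrow> 'a) \<Rightarrow> (nat \<Rightarrow> 'a) \<Rightarrow> complex"

definition density :: "nat set \<Rightarrow> ('a::{finite,zero}) op \<Rightarrow> bool" where
  "density K \<rho> \<longleftrightarrow>
     (\<forall>a\<in>lab K. \<forall>b\<in>lab K. \<rho> b a = cnj (\<rho> a b)) \<and>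
     (\<forall>\<psi> :: (nat \<Rightarrow> 'a) \<Rightarrow> complex.
        Im (\<Sum>a\<in>lab K. \<Sum>b\<in>lab K. cnj (\<psi> a) * \<rho> a b * \<psi> b) = 0 \<and>
        0 \<le> Re (\<Sum>a\<in>lab K. \<Sum>b\<in>lab K. cnj (\<psi> a) * \<rho> a b * \<psi> b)) \<and>
     (\<Sum>a\<in>lab K. \<rho> a a) = 1"

text \<open>Secret state rho_I (x) fully mixed state on the complement of I in {0..<L}.\<close>
definition secret_state :: "nat \<Rightarrow> nat set \<Rightarrow> ('a::{finite,zero}) op \<Rightarrow> 'a op" where
  "secret_state L I \<rho> = (\<lambda>s s'. \<rho> (proj I s) (proj I s') *
      (if proj ({..<L} - I) s = proj ({..<L} - I) s'
       then 1 / of_nat (card (UNIV :: 'a set) ^ card ({..<L} - I)) else 0))"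

text \<open>Amplitude of the encoded basis state |s> at the basis state |x> of the shares.\<close>
definition enc_ket :: "(nat \<Rightarrow> 'a) set \<Rightarrow> ((nat \<Rightarrow> 'a) \<Rightarrow> (nat \<Rightarrow> 'a) set) \<Rightarrow> (nat \<Rightarrow> 'a) \<Rightarrow> (nat \<Rightarrow> 'a) \<Rightarrow> complex" where
  "enc_ket C2 f s x = (if x \<in> f s then 1 / csqrt (of_nat (card C2)) else 0)"

text \<open>Encoded state V rho V^dagger.\<close>
definition encode :: "nat \<Rightarrow> (nat \<Rightarrow> 'a::{finite,zero}) set \<Rightarrow> ((nat \<Rightarrow> 'a) \<Rightarrow> (nat \<Rightarrow> 'a) set) \<Rightarrow> 'a op \<Rightarrow> 'a op" where
  "encode L C2 f \<rho> = (\<lambda>x y. \<Sum>s\<in>lab {..<L}. \<Sum>s'\<in>lab {..<L}.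
      enc_ket C2 f s x * \<rho> s s' * cnj (enc_ket C2 f s' y))"

text \<open>Partial trace over the shares outside J (shares are 0..<n); result indexed by lab J.\<close>
definition ptrace :: "nat \<Rightarrow> nat set \<Rightarrow> ('a::{finite,monoid_add}) op \<Rightarrow> 'a op" where
  "ptrace n J M = (\<lambda>a b. \<Sum>c\<in>lab ({..<n} - J). M (a + c) (b + c))"

definition strongly_secure ::
  "nat \<Rightarrow> nat \<Rightarrow> (nat \<Rightarrow> 'a::{finite,field}) set \<Rightarrow> ((nat \<Rightarrow> 'a) \<Rightarrow> (nat \<Rightarrow> 'a) set) \<Rightarrow> nat set \<Rightarrow> nat set \<Rightarrow> bool" where
  "strongly_secure n L C2 f I J \<longleftrightarrow>
     (\<forall>\<rho> \<rho>'. density I \<rho> \<longrightarrow> density I \<rho>' \<longrightarrow>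
        (\<forall>a\<in>lab J. \<forall>b\<in>lab J.
           ptrace n J (encode L C2 f (secret_state L I \<rho>)) a b =
           ptrace n J (encode L C2 f (secret_state L I \<rho>')) a b))"

text \<open>The vector (x, P_{I-bar}(s)): the coordinate s_i (i in I-bar) is placed at position n + i.\<close>
definition ext_vec :: "nat \<Rightarrow> nat set \<Rightarrow> (nat \<Rightarrow> 'a::zero) \<Rightarrow> (nat \<Rightarrow> 'a) \<Rightarrow> (nat \<Rightarrow> 'a)" where
  "ext_vec n Ibar x s = (\<lambda>k. if k < n then x k else if k - n \<in> Ibar then s (k - n) else 0)"

definition C1' :: "nat \<Rightarrow> nat \<Rightarrow> nat set \<Rightarrow> ((nat \<Rightarrow> 'a::zero) \<Rightarrow> (nat \<Rightarrow> 'a) set) \<Rightarrow> (nat \<Rightarrow> 'a) set" where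
  "C1' n L I f = {ext_vec n ({..<L} - I) x s | s x. s \<in> lab {..<L} \<and> x \<in> f s}"

definition C2' :: "nat \<Rightarrow> nat \<Rightarrow> nat set \<Rightarrow> ((nat \<Rightarrow> 'a::zero) \<Rightarrow> (nat \<Rightarrow> 'a) set) \<Rightarrow> (nat \<Rightarrow> 'a) set" where
  "C2' n L I f = {ext_vec n ({..<L} - I) x s | s x. s \<in> lab {..<L} \<and> proj I s = 0 \<and> x \<in> f s}"

end

theory Submission
  imports Defs "HOL-Library.FuncSet" "HOL-Library.Cardinality" "HOL-Library.Indicator_Function"
begin

(*
  Every codeword x of C1 lies in exactly one coset f s, and its secret s depends linearly
  on x.  Encoding rho_I (x) mixed and tracing out the shares outside J, the entry (a, b) of
  the reduced state is, up to a nonzero constant, a sum over the completions c of a and b by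
  shares outside J for which a + c and b + c are codewords whose secrets agree on I-bar, of
  the entries of rho_I at their I-parts.  Hence strong security is equivalent to:
  (B) every J-part of a codeword is the J-part of a codeword whose secret vanishes on I, and
  (A) a codeword vanishing outside J whose secret vanishes on I-bar has secret 0 on I.
  Sufficiency is read off the formula.  Necessity of (B) compares the basis states |u> and |0>
  on the diagonal, necessity of (A) compares (|u> + |0>)/sqrt 2 with (|u> - |0>)/sqrt 2 at an
  off-diagonal entry.  Finally C1' and C2' are the images of C1 and of the codewords with
  secret 0 on I under x -> (x, P_I-bar(secret x)); since a subspace has q^dim points,
  counting the fibres of the two puncturings turns (B) and (A) into the two dimension
  equations.
*)

lemma zero_in_lab [simp]: "0 \<in> lab K"
  by (simp add: lab_def)

lemma
  fixes v w :: "nat \<Rightarrow> 'a::ab_group_add"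
  shows add_in_lab: "v \<in> lab K \<Longrightarrow> w \<in> lab K \<Longrightarrow> v + w \<in> lab K"
    and diff_in_lab: "v \<in> lab K \<Longrightarrow> w \<in> lab K \<Longrightarrow> v - w \<in> lab K"
  by (simp_all add: lab_def)

lemma lab_mono: "A \<subseteq> B \<Longrightarrow> lab A \<subseteq> lab B"
  by (auto simp: lab_def)

lemma proj_in_lab [simp]: "proj K v \<in> lab K"
  by (simp add: proj_def lab_def)

lemma proj_eq_0_if_disjoint: "v \<in> lab A \<Longrightarrow> A \<inter> K = {} \<Longrightarrow> proj K v = 0"
  by (auto simp: proj_def lab_def fun_eq_iff)

lemma in_lab_diff_if_proj_eq_0: "v \<in> lab K \<Longrightarrow> proj A v = 0 \<Longrightarrow> v \<in> lab (K - A)"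
  by (auto simp: proj_def lab_def fun_eq_iff) meson

lemma lab_eq_0_if_proj_eq_0: "v \<in> lab K \<Longrightarrow> proj A v = 0 \<Longrightarrow> proj (K - A) v = 0 \<Longrightarrow> v = 0"
  by (auto simp: proj_def lab_def fun_eq_iff) meson

lemma mem_shift_iff: "k \<in> (+) n ` A \<longleftrightarrow> n \<le> k \<and> k - n \<in> A"
  for k n :: nat
  by (auto simp: image_iff intro!: bexI[where x = "k - n"])

lemma proj_lab_eq: "v \<in> lab K \<Longrightarrow> proj K v = v"
  by (simp add: proj_def lab_def fun_eq_iff)

lemma
  fixes v w :: "nat \<Rightarrow> 'a::field"
  shows proj_zero [simp]: "proj K 0 = 0"
    and proj_add: "proj K (v + w) = proj K v + proj K w"
    and proj_diff: "proj K (v - w) = proj K v - proj K w"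
    and proj_fscale: "proj K (fscale c v) = fscale c (proj K v)"
  by (simp_all add: proj_def fscale_def fun_eq_iff)

lemma bij_betw_restrict_lab:
  "bij_betw (\<lambda>v. restrict v K) (lab K :: (nat \<Rightarrow> 'a::zero) set) (PiE K (\<lambda>_. UNIV))"
proof (rule bij_betwI[where g = "\<lambda>g i. if i \<in> K then g i else 0"])
  show "(\<lambda>g i. if i \<in> K then g i else 0) \<in> PiE K (\<lambda>_. UNIV) \<rightarrow> lab K"
    by (auto simp: lab_def)
  show "restrict (\<lambda>i. if i \<in> K then g i else 0) K = g" if "g \<in> PiE K (\<lambda>_. UNIV)" for g :: "nat \<Rightarrow> 'a"
    using that by (auto simp: PiE_def extensional_def)
qed (auto simp: lab_def fun_eq_iff)

lemma finite_lab: "finite K \<Longrightarrow> finite (lab K :: (nat \<Rightarrow> 'a::{finite,zero}) set)"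
  by (rule bij_betw_finite[OF bij_betw_restrict_lab, THEN iffD2]) (simp add: finite_PiE)

lemma card_lab: "finite K \<Longrightarrow> card (lab K :: (nat \<Rightarrow> 'a::{finite,zero}) set) = CARD('a) ^ card K"
  by (subst bij_betw_same_card[OF bij_betw_restrict_lab]) (simp add: card_PiE)

lemma mem_coset_iff [simp]: "z \<in> coset C x \<longleftrightarrow> z - x \<in> C"
  for x z :: "nat \<Rightarrow> 'a::ab_group_add"
  unfolding coset_def by (auto intro: image_eqI[where x = "z - x"])

lemma coset_eq_coset:
  assumes "fvec.subspace C" "x - y \<in> C"
  shows "coset C x = coset C y"
proof -
  have "z - x \<in> C \<longleftrightarrow> z - y \<in> C" for z
    using fvec.subspace_add[OF assms(1) _ assms(2), of "z - x"]
      fvec.subspace_diff[OF assms(1) _ assms(2), of "z - y"]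
    by (auto simp: algebra_simps)
  then show ?thesis by auto
qed

section \<open>Counting points of subspaces over a finite field\<close>

lemma card_span_independent:
  fixes B :: "(nat \<Rightarrow> 'a::{finite,field}) set"
  assumes "finite B" "fvec.independent B"
  shows "card (fvec.span B) = CARD('a) ^ card B"
  using assms
proof (induction B rule: finite_induct)
  case empty
  then show ?case by simp
next
  case (insert a B)
  then have indep: "fvec.independent B" and a: "a \<notin> fvec.span B"
    by (auto simp: fvec.independent_insert)
  let ?g = "\<lambda>(k, y). fscale k a + y"
  have "fvec.span (insert a B) = ?g ` (UNIV \<times> fvec.span B)"
    by (auto simp: fvec.span_insert image_iff; metis add_diff_cancel_left' diff_add_cancel)
  moreover have "inj_on ?g (UNIV \<times> fvec.span B)"
  proof (rule inj_onI, clarsimp)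
    fix k k' y y' assume y: "y \<in> fvec.span B" "y' \<in> fvec.span B"
      and eq: "fscale k a + y = fscale k' a + y'"
    have "fscale (k - k') a = y' - y"
      using eq by (auto simp: fscale_def fun_eq_iff algebra_simps)
    then have span: "fscale (k - k') a \<in> fvec.span B"
      using fvec.span_diff[OF y(2) y(1)] by simp
    have "k = k'"
    proof (rule ccontr)
      assume "k \<noteq> k'"
      then have "fscale (inverse (k - k')) (fscale (k - k') a) = a"
        by (simp add: fscale_def fun_eq_iff)
      then show False
        using a fvec.span_scale[OF span, of "inverse (k - k')"] by simp
    qed
    then show "k = k' \<and> y = y'" using eq by simp
  qed
  ultimately show ?case
    using insert indep by (simp add: card_image card_cartesian_product)
qed

lemma card_subspace:
  fixes S :: "(nat \<Rightarrow> 'a::{finite,field}) set"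
  assumes "fvec.subspace S" "finite S"
  shows "card S = CARD('a) ^ fvec.dim S"
proof -
  obtain B where B: "B \<subseteq> S" "fvec.independent B" "S \<subseteq> fvec.span B" "card B = fvec.dim S"
    by (rule fvec.basis_exists)
  then have "fvec.span B = S"
    using assms(1) fvec.span_minimal by blast
  with B assms(2) show ?thesis
    using card_span_independent finite_subset by metis
qed

lemma one_less_card_field: "1 < CARD('a::{finite,field})"
proof -
  have "card {0, 1 :: 'a} \<le> CARD('a)"
    by (rule card_mono) simp_all
  then show ?thesis by simp
qed

lemma dim_diff_eq_iff_card:
  fixes S T :: "(nat \<Rightarrow> 'a::{finite,field}) set"
  assumes "fvec.subspace S" "finite S" "fvec.subspace T" "finite T"
  shows "int (fvec.dim T) - int (fvec.dim S) = int k \<longleftrightarrow> card T = CARD('a) ^ k * card S"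
proof -
  have "int (fvec.dim T) - int (fvec.dim S) = int k \<longleftrightarrow> fvec.dim T = k + fvec.dim S"
    by linarith
  also have "\<dots> \<longleftrightarrow> CARD('a) ^ fvec.dim T = CARD('a) ^ (k + fvec.dim S)"
    using one_less_card_field[where 'a = 'a] by simp
  finally show ?thesis
    using assms by (simp add: card_subspace power_add)
qed

lemma subspace_image_linear_on:
  assumes "fvec.subspace C"
    and "\<And>x y. x \<in> C \<Longrightarrow> y \<in> C \<Longrightarrow> h (x + y) = h x + h y"
    and "\<And>c x. x \<in> C \<Longrightarrow> h (fscale c x) = fscale c (h x)"
  shows "fvec.subspace (h ` C)"
proof (rule fvec.subspaceI, safe)
  have "h 0 = 0"
    using assms(3)[OF fvec.subspace_0[OF assms(1)], of 0] by (simp add: fscale_def zero_fun_def)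
  then show "0 \<in> h ` C"
    using fvec.subspace_0[OF assms(1)] by force
next
  fix x y assume "x \<in> C" "y \<in> C"
  then show "h x + h y \<in> h ` C"
    using assms(1,2) fvec.subspace_add by (metis image_eqI)
next
  fix c x assume "x \<in> C"
  then show "fscale c (h x) \<in> h ` C"
    using assms(1,3) fvec.subspace_scale by (metis image_eqI)
qed

lemma card_eq_card_image_mult_card_kernel:
  fixes h :: "(nat \<Rightarrow> 'a::field) \<Rightarrow> 'b::ab_group_add"
  assumes C: "fvec.subspace C" "finite C"
    and hom: "\<And>x y. x \<in> C \<Longrightarrow> y \<in> C \<Longrightarrow> h (x - y) = h x - h y"
  shows "card C = card (h ` C) * card {x \<in> C. h x = 0}"
proof -
  have fibre: "card {x \<in> C. h x = h x0} = card {x \<in> C. h x = 0}" if "x0 \<in> C" for x0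
  proof (rule bij_betw_same_card[OF bij_betwI[where f = "\<lambda>x. x - x0" and g = "\<lambda>x. x + x0"]])
    show "(\<lambda>x. x - x0) \<in> {x \<in> C. h x = h x0} \<rightarrow> {x \<in> C. h x = 0}"
      using that C hom by (auto intro: fvec.subspace_diff)
    show "(\<lambda>x. x + x0) \<in> {x \<in> C. h x = 0} \<rightarrow> {x \<in> C. h x = h x0}"
    proof
      fix x assume x: "x \<in> {x \<in> C. h x = 0}"
      then have "x + x0 \<in> C"
        using that C(1) by (simp add: fvec.subspace_add)
      with x hom[OF this that] show "x + x0 \<in> {x \<in> C. h x = h x0}" by simp
    qed
  qed auto
  have "card C = (\<Sum>y\<in>h ` C. card {x \<in> C. h x = y})"
    using sum.image_gen[OF C(2), of "\<lambda>_. 1::nat" h] by simp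
  also have "\<dots> = (\<Sum>y\<in>h ` C. card {x \<in> C. h x = 0})"
    by (rule sum.cong[OF refl]) (auto simp: fibre)
  finally show ?thesis by simp
qed

lemma strongly_secureD:
  "strongly_secure n L C2 f I J \<Longrightarrow> density I \<rho> \<Longrightarrow> density I \<rho>' \<Longrightarrow>
    a \<in> lab J \<Longrightarrow> b \<in> lab J \<Longrightarrow>
    ptrace n J (encode L C2 f (secret_state L I \<rho>)) a b
      = ptrace n J (encode L C2 f (secret_state L I \<rho>')) a b"
  unfolding strongly_secure_def by blast

definition pure_state :: "((nat \<Rightarrow> 'a) \<Rightarrow> real) \<Rightarrow> 'a op" where
  "pure_state v = (\<lambda>a b. complex_of_real (v a * v b))"

lemma density_pure_state:
  fixes v :: "(nat \<Rightarrow> 'a::{finite,zero}) \<Rightarrow> real"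
  assumes "(\<Sum>a\<in>lab K. v a * v a) = 1"
  shows "density K (pure_state v)"
  unfolding density_def pure_state_def
proof (intro conjI allI ballI)
  show "(\<Sum>a\<in>lab K. complex_of_real (v a * v a)) = 1"
    unfolding of_real_sum[symmetric] assms by simp
next
  fix \<psi> :: "(nat \<Rightarrow> 'a) \<Rightarrow> complex"
  define z where "z = (\<Sum>b\<in>lab K. complex_of_real (v b) * \<psi> b)"
  have "(\<Sum>a\<in>lab K. \<Sum>b\<in>lab K. cnj (\<psi> a) * complex_of_real (v a * v b) * \<psi> b)
      = (\<Sum>a\<in>lab K. cnj (\<psi> a) * complex_of_real (v a)) * z"
    unfolding z_def sum_product by (simp add: mult_ac)
  also have "(\<Sum>a\<in>lab K. cnj (\<psi> a) * complex_of_real (v a)) = cnj z"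
    unfolding z_def by (simp add: mult.commute)
  also have "cnj z * z = complex_of_real ((Re z)\<^sup>2 + (Im z)\<^sup>2)"
    using complex_mult_cnj[of z] by (simp add: mult.commute)
  finally have quad: "(\<Sum>a\<in>lab K. \<Sum>b\<in>lab K. cnj (\<psi> a) * complex_of_real (v a * v b) * \<psi> b)
      = complex_of_real ((Re z)\<^sup>2 + (Im z)\<^sup>2)" .
  show "Im (\<Sum>a\<in>lab K. \<Sum>b\<in>lab K. cnj (\<psi> a) * complex_of_real (v a * v b) * \<psi> b) = 0"
    and "0 \<le> Re (\<Sum>a\<in>lab K. \<Sum>b\<in>lab K. cnj (\<psi> a) * complex_of_real (v a * v b) * \<psi> b)"
    unfolding quad by simp_all
qed (simp add: mult.commute)

lemma density_basis_state:
  "finite K \<Longrightarrow> u \<in> lab K \<Longrightarrow> density K (pure_state (indicator {u}))"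
  by (rule density_pure_state) (simp add: finite_lab indicator_def)

definition superposition :: "'b \<Rightarrow> 'b \<Rightarrow> real \<Rightarrow> 'b \<Rightarrow> real" where
  "superposition u u' \<sigma> p = (indicator {u} p + \<sigma> * indicator {u'} p) / sqrt 2"

lemma density_superposition:
  assumes "finite K" "u \<in> lab K" "u' \<in> lab K" "u \<noteq> u'" "\<sigma> * \<sigma> = 1"
  shows "density K (pure_state (superposition u u' \<sigma>))"
proof (rule density_pure_state)
  have square: "superposition u u' \<sigma> p * superposition u u' \<sigma> p = (indicator {u} p + indicator {u'} p) / 2" for p
    using assms(4,5) by (auto simp: superposition_def indicator_def)
  have "(\<Sum>p\<in>lab K. superposition u u' \<sigma> p * superposition u u' \<sigma> p)
      = ((\<Sum>p\<in>lab K. indicator {u} p) + (\<Sum>p\<in>lab K. indicator {u'} p)) / 2"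
    by (simp only: square flip: sum_divide_distrib) (simp add: sum.distrib)
  also have "\<dots> = 1"
    using assms(1-3) by (simp add: finite_lab indicator_def)
  finally show "(\<Sum>p\<in>lab K. superposition u u' \<sigma> p * superposition u u' \<sigma> p) = 1" .
qed

lemma superposition_product_diff:
  "superposition u u' 1 x * superposition u u' 1 y - superposition u u' (-1) x * superposition u u' (-1) y
     = indicator {u} x * indicator {u'} y + indicator {u'} x * indicator {u} y"
  by (simp add: superposition_def field_simps)

section \<open>The secret carried by a codeword\<close>

locale ramp_scheme =
  fixes C1 C2 :: "(nat \<Rightarrow> 'a::{finite,field}) set"
    and f :: "(nat \<Rightarrow> 'a) \<Rightarrow> (nat \<Rightarrow> 'a) set"
    and n L :: nat and I J :: "nat set"
  assumes C1_lab: "C1 \<subseteq> lab {..<n}"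
    and subspace_C1: "fvec.subspace C1" and subspace_C2: "fvec.subspace C2"
    and C2_subset_C1: "C2 \<subseteq> C1"
    and quotient_iso: "quotient_iso L C1 C2 f"
    and I_subset: "I \<subseteq> {..<L}" and J_subset: "J \<subseteq> {..<n}"
begin

abbreviation "Ib \<equiv> {..<L} - I"
abbreviation "Jb \<equiv> {..<n} - J"

lemma f_coset: "s \<in> lab {..<L} \<Longrightarrow> \<exists>x\<in>C1. f s = coset C2 x"
  and f_add: "s \<in> lab {..<L} \<Longrightarrow> t \<in> lab {..<L} \<Longrightarrow> f (s + t) = {x + y | x y. x \<in> f s \<and> y \<in> f t}"
  and f_fscale: "s \<in> lab {..<L} \<Longrightarrow> x \<in> f s \<Longrightarrow> f (fscale c s) = coset C2 (fscale c x)"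
  and inj_on_f: "inj_on f (lab {..<L})"
  and C1_covered: "x \<in> C1 \<Longrightarrow> \<exists>s\<in>lab {..<L}. x \<in> f s"
  using quotient_iso unfolding quotient_iso_def by blast+

lemma finite_C1: "finite C1"
  using C1_lab finite_lab[of "{..<n}", where 'a = 'a] finite_subset by blast

lemma finite_C2: "finite C2"
  using C2_subset_C1 finite_C1 finite_subset by blast

lemma finite_I: "finite I"
  using I_subset finite_subset by blast

lemma f_eq_coset:
  assumes "s \<in> lab {..<L}" "x \<in> f s"
  shows "f s = coset C2 x" and "x \<in> C1"
proof -
  obtain y where y: "y \<in> C1" "f s = coset C2 y"
    using f_coset[OF assms(1)] by blast
  then have "x - y \<in> C2"
    using assms(2) by simp
  then show "f s = coset C2 x"
    using y(2) coset_eq_coset[OF subspace_C2] by simp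
  show "x \<in> C1"
    using fvec.subspace_add[OF subspace_C1 C2_subset_C1[THEN subsetD, OF \<open>x - y \<in> C2\<close>] y(1)]
    by simp
qed

lemma f_disjoint:
  assumes "s \<in> lab {..<L}" "t \<in> lab {..<L}" "x \<in> f s" "x \<in> f t"
  shows "s = t"
  using assms f_eq_coset(1) inj_on_f by (metis inj_onD)

definition secret :: "(nat \<Rightarrow> 'a) \<Rightarrow> nat \<Rightarrow> 'a" where
  "secret x = (THE s. s \<in> lab {..<L} \<and> x \<in> f s)"

lemma secret_eqI: "s \<in> lab {..<L} \<Longrightarrow> x \<in> f s \<Longrightarrow> secret x = s"
  unfolding secret_def by (rule the_equality) (auto intro: f_disjoint)

lemma secret_in_lab: "x \<in> C1 \<Longrightarrow> secret x \<in> lab {..<L}"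
  and mem_f_secret: "x \<in> C1 \<Longrightarrow> x \<in> f (secret x)"
  using C1_covered secret_eqI by metis+

lemma mem_f_iff: "s \<in> lab {..<L} \<Longrightarrow> x \<in> f s \<longleftrightarrow> x \<in> C1 \<and> secret x = s"
  using f_eq_coset(2) secret_eqI mem_f_secret by metis

lemma secret_add:
  assumes "x \<in> C1" "y \<in> C1"
  shows "secret (x + y) = secret x + secret y"
proof (rule secret_eqI)
  show "secret x + secret y \<in> lab {..<L}"
    using assms by (simp add: add_in_lab secret_in_lab)
  show "x + y \<in> f (secret x + secret y)"
    using assms f_add[OF secret_in_lab secret_in_lab] mem_f_secret by blast
qed

lemma secret_fscale: "x \<in> C1 \<Longrightarrow> secret (fscale c x) = fscale c (secret x)"
  using f_fscale[of "secret x" x c] secret_in_lab mem_f_secret fvec.subspace_0[OF subspace_C2]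
  by (intro secret_eqI) (auto simp: lab_def fscale_def)

lemma secret_diff: "x \<in> C1 \<Longrightarrow> y \<in> C1 \<Longrightarrow> secret (x - y) = secret x - secret y"
  using secret_add[of y "x - y"] fvec.subspace_diff[OF subspace_C1] by simp

lemma secret_zero [simp]: "secret 0 = 0"
  using secret_diff[of 0 0] fvec.subspace_0[OF subspace_C1] by simp

lemma mem_C2_iff: "x \<in> C2 \<longleftrightarrow> x \<in> C1 \<and> secret x = 0"
proof -
  have "0 \<in> f 0"
    using mem_f_secret[of 0] fvec.subspace_0[OF subspace_C1] by simp
  then have "f 0 = coset C2 0"
    by (rule f_eq_coset(1)[OF zero_in_lab])
  also have "coset C2 0 = C2"
    by (simp add: set_eq_iff)
  finally show ?thesis
    using mem_f_iff[of 0 x] by simp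
qed

lemma secret_surj: "u \<in> lab {..<L} \<Longrightarrow> \<exists>x\<in>C1. secret x = u"
  using f_coset fvec.subspace_0[OF subspace_C2] mem_f_iff by fastforce

definition secret_I :: "(nat \<Rightarrow> 'a) \<Rightarrow> nat \<Rightarrow> 'a" where
  "secret_I x = proj I (secret x)"

lemma secret_I_in_lab [simp]: "secret_I x \<in> lab I"
  by (simp add: secret_I_def)

lemma secret_I_add: "x \<in> C1 \<Longrightarrow> y \<in> C1 \<Longrightarrow> secret_I (x + y) = secret_I x + secret_I y"
  and secret_I_diff: "x \<in> C1 \<Longrightarrow> y \<in> C1 \<Longrightarrow> secret_I (x - y) = secret_I x - secret_I y"
  and secret_I_fscale: "x \<in> C1 \<Longrightarrow> secret_I (fscale c x) = fscale c (secret_I x)"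
  and secret_I_zero [simp]: "secret_I 0 = 0"
  by (simp_all add: secret_I_def secret_add secret_diff secret_fscale proj_add proj_diff proj_fscale)

lemma secret_I_surj: "u \<in> lab I \<Longrightarrow> \<exists>x\<in>C1. secret_I x = u"
  using secret_surj[of u] I_subset proj_lab_eq[of u I] by (auto simp: secret_I_def lab_def)

definition C0 :: "(nat \<Rightarrow> 'a) set" where
  "C0 = {x \<in> C1. secret_I x = 0}"

lemma C0_subset_C1: "C0 \<subseteq> C1"
  and finite_C0: "finite C0"
  using finite_C1 by (auto simp: C0_def intro: finite_subset)

lemma subspace_C0: "fvec.subspace C0"
proof (rule fvec.subspaceI)
  show "0 \<in> C0"
    using fvec.subspace_0[OF subspace_C1] by (simp add: C0_def)
  show "x + y \<in> C0" if "x \<in> C0" "y \<in> C0" for x y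
    using that fvec.subspace_add[OF subspace_C1] by (simp add: C0_def secret_I_add)
  show "fscale c x \<in> C0" if "x \<in> C0" for c x
    using that fvec.subspace_scale[OF subspace_C1]
    by (simp add: C0_def secret_I_fscale)
qed

lemma card_C1: "card C1 = CARD('a) ^ card I * card C0"
proof -
  have "secret_I ` C1 = lab I"
    using secret_I_surj by fastforce
  with finite_I show ?thesis
    using card_eq_card_image_mult_card_kernel[OF subspace_C1 finite_C1, of secret_I]
    by (simp add: secret_I_diff card_lab C0_def)
qed

section \<open>The reduced state of a set of shares\<close>

definition enc_const :: complex where
  "enc_const = 1 / (of_nat (card C2) * of_nat (CARD('a) ^ card Ib))"

lemma enc_const_nonzero: "enc_const \<noteq> 0"
proof -
  have "card C2 \<noteq> 0"
    using finite_C2 fvec.subspace_0[OF subspace_C2] by auto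
  then show ?thesis
    by (simp add: enc_const_def)
qed

lemma enc_ket_mult_cnj:
  "enc_ket C2 f s x * cnj (enc_ket C2 f s' y) = (if x \<in> f s \<and> y \<in> f s' then 1 / of_nat (card C2) else 0)"
proof -
  have "csqrt (of_nat m) = of_real (sqrt (real m))" for m
    using csqrt_of_real_nonneg[of "of_nat m"] by simp
  moreover have "of_real (sqrt (real m)) * of_real (sqrt (real m)) = (of_nat m :: complex)" for m
    by (simp flip: of_real_mult)
  ultimately show ?thesis
    by (simp add: enc_ket_def)
qed

lemma sum_lab_mem_f:
  "(\<Sum>s\<in>lab {..<L}. if x \<in> f s then g s else 0) = (if x \<in> C1 then g (secret x) else 0)"
proof (cases "x \<in> C1")
  case True
  then have "(\<Sum>s\<in>lab {..<L}. if x \<in> f s then g s else 0)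
      = (\<Sum>s\<in>lab {..<L}. if secret x = s then g s else 0)"
    by (intro sum.cong refl) (simp add: mem_f_iff)
  with True show ?thesis
    by (simp add: finite_lab secret_in_lab)
qed (auto intro!: sum.neutral dest: f_eq_coset(2))

lemma encode_secret_state:
  "encode L C2 f (secret_state L I \<rho>) x y =
    (if x \<in> C1 \<and> y \<in> C1 \<and> proj Ib (secret x) = proj Ib (secret y)
     then enc_const * \<rho> (secret_I x) (secret_I y) else 0)"
proof -
  let ?\<sigma> = "secret_state L I \<rho>"
  have summand: "enc_ket C2 f s x * ?\<sigma> s s' * cnj (enc_ket C2 f s' y)
      = (if x \<in> f s then if y \<in> f s' then ?\<sigma> s s' / of_nat (card C2) else 0 else 0)" for s s'
  proof -
    have "enc_ket C2 f s x * ?\<sigma> s s' * cnj (enc_ket C2 f s' y)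
        = enc_ket C2 f s x * cnj (enc_ket C2 f s' y) * ?\<sigma> s s'"
      by (simp only: mult_ac)
    also have "\<dots> = (if x \<in> f s then if y \<in> f s' then ?\<sigma> s s' / of_nat (card C2) else 0 else 0)"
      unfolding enc_ket_mult_cnj by simp
    finally show ?thesis .
  qed
  have "encode L C2 f ?\<sigma> x y =
      (\<Sum>s\<in>lab {..<L}. if x \<in> f s then
         (\<Sum>s'\<in>lab {..<L}. if y \<in> f s' then ?\<sigma> s s' / of_nat (card C2) else 0) else 0)"
    unfolding encode_def summand by (intro sum.cong refl) auto
  also have "\<dots> = (if x \<in> C1 \<and> y \<in> C1
      then secret_state L I \<rho> (secret x) (secret y) / of_nat (card C2) else 0)"
    by (simp add: sum_lab_mem_f)
  finally show ?thesis
    by (simp add: secret_state_def enc_const_def secret_I_def)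
qed

definition contributes :: "(nat \<Rightarrow> 'a) \<Rightarrow> (nat \<Rightarrow> 'a) \<Rightarrow> (nat \<Rightarrow> 'a) \<Rightarrow> bool" where
  "contributes a b c \<longleftrightarrow>
     a + c \<in> C1 \<and> b + c \<in> C1 \<and> proj Ib (secret (a + c)) = proj Ib (secret (b + c))"

lemma ptrace_encode:
  "ptrace n J (encode L C2 f (secret_state L I \<rho>)) a b =
     enc_const * (\<Sum>c\<in>lab Jb. if contributes a b c then \<rho> (secret_I (a + c)) (secret_I (b + c)) else 0)"
  unfolding ptrace_def encode_secret_state sum_distrib_left contributes_def
  by (intro sum.cong refl) simp

definition completions :: "(nat \<Rightarrow> 'a) \<Rightarrow> (nat \<Rightarrow> 'a) \<Rightarrow> (nat \<Rightarrow> 'a) set" where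
  "completions b u = {c \<in> lab Jb. b + c \<in> C1 \<and> secret_I (b + c) = u}"

lemma finite_completions: "finite (completions b u)"
  by (simp add: completions_def finite_lab)

lemma ptrace_encode_diag:
  "ptrace n J (encode L C2 f (secret_state L I \<rho>)) b b =
     enc_const * (\<Sum>u\<in>lab I. of_nat (card (completions b u)) * \<rho> u u)"
proof -
  let ?A = "{c \<in> lab Jb. b + c \<in> C1}"
  have "(\<Sum>c\<in>lab Jb. if contributes b b c then \<rho> (secret_I (b + c)) (secret_I (b + c)) else 0)
      = (\<Sum>c\<in>?A. \<rho> (secret_I (b + c)) (secret_I (b + c)))"
    by (simp add: contributes_def sum.inter_filter finite_lab)
  also have "\<dots> = (\<Sum>u\<in>lab I. \<Sum>c\<in>{c. c \<in> ?A \<and> secret_I (b + c) = u}.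
      \<rho> (secret_I (b + c)) (secret_I (b + c)))"
    by (intro sum.group[symmetric]) (auto simp: finite_lab finite_I)
  also have "\<dots> = (\<Sum>u\<in>lab I. of_nat (card (completions b u)) * \<rho> u u)"
    by (intro sum.cong refl) (simp add: completions_def conj_assoc)
  finally show ?thesis
    by (simp add: ptrace_encode)
qed

section \<open>Strong security in terms of the codes\<close>

definition complement_determines_I :: bool where
  "complement_determines_I \<longleftrightarrow>
     (\<forall>d\<in>C1. proj Jb d = 0 \<and> proj Ib (secret d) = 0 \<longrightarrow> secret_I d = 0)"

definition J_blind_to_I :: bool where
  "J_blind_to_I \<longleftrightarrow> proj J ` C1 \<subseteq> proj J ` C0"

lemma C2_translate:
  assumes "x - y \<in> C2" "y \<in> C1"
  shows "x \<in> C1" and "secret x = secret y"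
proof -
  have x: "x = (x - y) + y"
    by simp
  have "x - y \<in> C1" "secret (x - y) = 0"
    using assms(1) by (simp_all add: mem_C2_iff)
  then show "x \<in> C1" "secret x = secret y"
    using fvec.subspace_add[OF subspace_C1 _ assms(2), of "x - y"] secret_add[OF _ assms(2), of "x - y"]
    by simp_all
qed

lemma proj_complement_eq_0: "v \<in> lab J \<Longrightarrow> proj Jb v = 0"
  by (rule proj_eq_0_if_disjoint) auto

lemma lab_J_if_proj_complement_eq_0: "v \<in> C1 \<Longrightarrow> proj Jb v = 0 \<Longrightarrow> v \<in> lab J"
proof -
  assume "v \<in> C1" "proj Jb v = 0"
  then have "v \<in> lab ({..<n} - Jb)"
    using C1_lab by (intro in_lab_diff_if_proj_eq_0) auto
  moreover have "{..<n} - Jb = J"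
    using J_subset by auto
  ultimately show "v \<in> lab J"
    by simp
qed

lemma contributes_iff:
  assumes A: complement_determines_I and a: "a \<in> lab J" and b: "b \<in> lab J"
  shows "contributes a b c \<longleftrightarrow> a - b \<in> C2 \<and> b + c \<in> C1"
proof
  assume "contributes a b c"
  then have ac: "a + c \<in> C1" and bc: "b + c \<in> C1"
    and Ib_eq: "proj Ib (secret (a + c)) = proj Ib (secret (b + c))"
    by (simp_all add: contributes_def)
  have diff: "a - b = (a + c) - (b + c)"
    by simp
  have d: "a - b \<in> C1"
    unfolding diff using fvec.subspace_diff[OF subspace_C1 ac bc] .
  have Ib_0: "proj Ib (secret (a - b)) = 0"
    unfolding diff secret_diff[OF ac bc] proj_diff Ib_eq by simp
  moreover have "proj Jb (a - b) = 0"
    using a b by (simp add: proj_complement_eq_0 diff_in_lab)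
  ultimately have "secret_I (a - b) = 0"
    using A d unfolding complement_determines_I_def by blast
  then have "secret (a - b) = 0"
    using lab_eq_0_if_proj_eq_0[OF secret_in_lab[OF d]] Ib_0 by (simp add: secret_I_def)
  with d bc show "a - b \<in> C2 \<and> b + c \<in> C1"
    by (simp add: mem_C2_iff)
next
  assume "a - b \<in> C2 \<and> b + c \<in> C1"
  then show "contributes a b c"
    using C2_translate[of "a + c" "b + c"] by (simp add: contributes_def)
qed

lemma ptrace_encode_offdiag:
  assumes A: complement_determines_I and "a \<in> lab J" "b \<in> lab J"
  shows "ptrace n J (encode L C2 f (secret_state L I \<rho>)) a b =
    (if a - b \<in> C2 then ptrace n J (encode L C2 f (secret_state L I \<rho>)) b b else 0)"
proof -
  have "(if contributes a b c then \<rho> (secret_I (a + c)) (secret_I (b + c)) else 0) =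
      (if a - b \<in> C2 then if contributes b b c then \<rho> (secret_I (b + c)) (secret_I (b + c)) else 0 else 0)"
    for c
  proof -
    have "a - b \<in> C2 \<Longrightarrow> b + c \<in> C1 \<Longrightarrow> secret_I (a + c) = secret_I (b + c)"
      using C2_translate(2)[of "a + c" "b + c"] by (simp add: secret_I_def)
    then show ?thesis
      using contributes_iff[OF A] assms(2,3) fvec.subspace_0[OF subspace_C2] by auto
  qed
  then show ?thesis
    unfolding ptrace_encode by (simp add: sum.neutral)
qed

lemma bij_betw_completions_shift:
  assumes e: "e \<in> C1" "e \<in> lab Jb"
  shows "bij_betw (\<lambda>c. c + e) (completions b u) (completions b (u + secret_I e))"
proof (rule bij_betwI[where g = "\<lambda>c. c - e"])
  show "(\<lambda>c. c + e) \<in> completions b u \<rightarrow> completions b (u + secret_I e)"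
  proof
    fix c assume "c \<in> completions b u"
    then have c: "c \<in> lab Jb" "b + c \<in> C1" "secret_I (b + c) = u"
      by (simp_all add: completions_def)
    then show "c + e \<in> completions b (u + secret_I e)"
      using e fvec.subspace_add[OF subspace_C1 c(2) e(1)] secret_I_add[OF c(2) e(1)]
      by (simp add: completions_def add_in_lab add.assoc[symmetric])
  qed
  show "(\<lambda>c. c - e) \<in> completions b (u + secret_I e) \<rightarrow> completions b u"
  proof
    fix c assume "c \<in> completions b (u + secret_I e)"
    then have c: "c \<in> lab Jb" "b + c \<in> C1" "secret_I (b + c) = u + secret_I e"
      by (simp_all add: completions_def)
    then show "c - e \<in> completions b u"
      using e fvec.subspace_diff[OF subspace_C1 c(2) e(1)] secret_I_diff[OF c(2) e(1)]
      by (simp add: completions_def diff_in_lab add_diff_eq)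
  qed
qed auto

lemma card_completions_eq:
  assumes B: J_blind_to_I and u: "u \<in> lab I"
  shows "card (completions b u) = card (completions b 0)"
proof -
  obtain z where z: "z \<in> C1" "secret_I z = u"
    using secret_I_surj[OF u] by blast
  have "proj J z \<in> proj J ` C0"
    using subsetD[OF B[unfolded J_blind_to_I_def] imageI[OF z(1)]] .
  then obtain z0 where z0: "z0 \<in> C1" "secret_I z0 = 0" "proj J z0 = proj J z"
    by (auto simp: C0_def)
  have e: "z - z0 \<in> C1" "secret_I (z - z0) = u"
    using z z0 by (simp_all add: secret_I_diff fvec.subspace_diff[OF subspace_C1])
  moreover have "z - z0 \<in> lab Jb"
    using e(1) z0(3) C1_lab by (intro in_lab_diff_if_proj_eq_0) (auto simp: proj_diff)
  ultimately show ?thesis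
    using bij_betw_same_card[OF bij_betw_completions_shift, of "z - z0" b 0] by simp
qed

lemma ptrace_encode_if_conditions:
  assumes A: complement_determines_I and B: J_blind_to_I
    and \<rho>: "density I \<rho>" and "a \<in> lab J" "b \<in> lab J"
  shows "ptrace n J (encode L C2 f (secret_state L I \<rho>)) a b =
    (if a - b \<in> C2 then enc_const * of_nat (card (completions b 0)) else 0)"
proof -
  have "(\<Sum>u\<in>lab I. of_nat (card (completions b u)) * \<rho> u u)
      = (\<Sum>u\<in>lab I. of_nat (card (completions b 0)) * \<rho> u u)"
  proof (rule sum.cong[OF refl])
    fix u :: "nat \<Rightarrow> 'a" assume "u \<in> lab I"
    then show "of_nat (card (completions b u)) * \<rho> u u = of_nat (card (completions b 0)) * \<rho> u u"
      by (simp only: card_completions_eq[OF B])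
  qed
  also have "\<dots> = of_nat (card (completions b 0)) * (\<Sum>u\<in>lab I. \<rho> u u)"
    by (simp add: sum_distrib_left)
  also have "(\<Sum>u\<in>lab I. \<rho> u u) = 1"
    using \<rho> unfolding density_def by blast
  finally have "(\<Sum>u\<in>lab I. of_nat (card (completions b u)) * \<rho> u u) = of_nat (card (completions b 0))"
    by (simp only: mult_1_right)
  then show ?thesis
    using ptrace_encode_offdiag[OF A assms(4,5)] by (simp add: ptrace_encode_diag)
qed

lemma secure_if_conditions:
  "complement_determines_I \<Longrightarrow> J_blind_to_I \<Longrightarrow> strongly_secure n L C2 f I J"
  unfolding strongly_secure_def by (simp add: ptrace_encode_if_conditions)

lemma ptrace_encode_pure_state:
  "ptrace n J (encode L C2 f (secret_state L I (pure_state v))) a b =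
     enc_const * complex_of_real
       (\<Sum>c\<in>lab Jb. if contributes a b c then v (secret_I (a + c)) * v (secret_I (b + c)) else 0)"
  unfolding ptrace_encode pure_state_def of_real_sum
  by (intro arg_cong[where f = "\<lambda>x. enc_const * x"] sum.cong refl) simp

lemma secure_imp_card_completions_eq:
  assumes S: "strongly_secure n L C2 f I J" and "b \<in> lab J" "u \<in> lab I"
  shows "card (completions b u) = card (completions b 0)"
proof -
  have diag: "ptrace n J (encode L C2 f (secret_state L I (pure_state (indicator {v})))) b b
      = enc_const * of_nat (card (completions b v))" if "v \<in> lab I" for v
  proof -
    have "of_nat (card (completions b u)) * pure_state (indicator {v}) u u
        = (if u = v then of_nat (card (completions b v)) else 0)" for u
      by (simp add: pure_state_def)
    with that show ?thesis
      by (simp add: ptrace_encode_diag finite_lab finite_I)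
  qed
  have "ptrace n J (encode L C2 f (secret_state L I (pure_state (indicator {u})))) b b
      = ptrace n J (encode L C2 f (secret_state L I (pure_state (indicator {0})))) b b"
    using strongly_secureD[OF S density_basis_state[OF finite_I assms(3)]
        density_basis_state[OF finite_I zero_in_lab] assms(2) assms(2)] .
  then show ?thesis
    using assms(3) enc_const_nonzero by (simp add: diag)
qed

lemma secure_imp_J_blind_to_I:
  assumes S: "strongly_secure n L C2 f I J"
  shows J_blind_to_I
  unfolding J_blind_to_I_def
proof (rule image_subsetI)
  fix z assume z: "z \<in> C1"
  define b where "b = proj J z"
  have "b \<in> lab {..<n}"
    using lab_mono[OF J_subset] by (auto simp: b_def)
  then have "z - b \<in> lab Jb"
    using z C1_lab by (intro in_lab_diff_if_proj_eq_0) (auto simp: b_def proj_diff proj_lab_eq diff_in_lab)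
  then have "z - b \<in> completions b (secret_I z)"
    using z by (simp add: completions_def)
  then have "completions b 0 \<noteq> {}"
    using secure_imp_card_completions_eq[OF S, of b "secret_I z"] finite_completions
    by (auto simp: b_def)
  then obtain c where c: "c \<in> lab Jb" "b + c \<in> C1" "secret_I (b + c) = 0"
    by (auto simp: completions_def)
  moreover have "proj J c = 0"
    by (rule proj_eq_0_if_disjoint[OF c(1)]) auto
  ultimately have "proj J (b + c) = proj J z"
    by (simp add: b_def proj_add proj_lab_eq)
  with c show "proj J z \<in> proj J ` C0"
    by (auto simp: C0_def intro!: image_eqI[where x = "b + c"])
qed

lemma ptrace_encode_superposition_diff:
  "ptrace n J (encode L C2 f (secret_state L I (pure_state (superposition u u' 1)))) a b
     - ptrace n J (encode L C2 f (secret_state L I (pure_state (superposition u u' (-1))))) a b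
   = enc_const * complex_of_real (\<Sum>c\<in>lab Jb. if contributes a b c then
       indicator {u} (secret_I (a + c)) * indicator {u'} (secret_I (b + c)) +
       indicator {u'} (secret_I (a + c)) * indicator {u} (secret_I (b + c)) else 0)"
  unfolding ptrace_encode_pure_state right_diff_distrib[symmetric] of_real_diff[symmetric]
    sum_subtractf[symmetric]
proof (intro arg_cong[where f = "\<lambda>x. enc_const * complex_of_real x"] sum.cong refl)
  fix c
  show "(if contributes a b c then
        superposition u u' 1 (secret_I (a + c)) * superposition u u' 1 (secret_I (b + c)) else 0)
      - (if contributes a b c then
        superposition u u' (-1) (secret_I (a + c)) * superposition u u' (-1) (secret_I (b + c)) else 0)
    = (if contributes a b c then
       indicator {u} (secret_I (a + c)) * indicator {u'} (secret_I (b + c)) +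
       indicator {u'} (secret_I (a + c)) * indicator {u} (secret_I (b + c)) else 0)"
    by (cases "contributes a b c") (simp_all only: if_True if_False superposition_product_diff diff_zero)
qed

lemma secure_imp_complement_determines_I:
  assumes S: "strongly_secure n L C2 f I J"
  shows complement_determines_I
  unfolding complement_determines_I_def
proof (intro ballI impI, rule ccontr)
  fix d assume d: "d \<in> C1" and view: "proj Jb d = 0 \<and> proj Ib (secret d) = 0"
    and u: "secret_I d \<noteq> 0"
  define t :: "(nat \<Rightarrow> 'a) \<Rightarrow> real" where "t c = (if contributes d 0 c then
      indicator {secret_I d} (secret_I (d + c)) * indicator {0} (secret_I (0 + c)) +
      indicator {0} (secret_I (d + c)) * indicator {secret_I d} (secret_I (0 + c)) else 0)" for c
  \<comment> \<open>Security makes the reduced states of the two superpositions agree at (d, 0), but their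
    difference there is a sum of nonnegative terms, the one for c = 0 being 1.\<close>
  have "d \<in> lab J"
    using d view by (simp add: lab_J_if_proj_complement_eq_0)
  moreover have "density I (pure_state (superposition (secret_I d) 0 \<sigma>))" if "\<sigma> * \<sigma> = 1" for \<sigma>
    using u that by (simp add: density_superposition finite_I)
  ultimately have "ptrace n J (encode L C2 f (secret_state L I (pure_state (superposition (secret_I d) 0 1)))) d 0
      - ptrace n J (encode L C2 f (secret_state L I (pure_state (superposition (secret_I d) 0 (-1))))) d 0 = 0"
    using strongly_secureD[OF S _ _ _ zero_in_lab] by simp
  then have "enc_const * complex_of_real (\<Sum>c\<in>lab Jb. t c) = 0"
    by (simp only: ptrace_encode_superposition_diff t_def)
  then have sum_zero: "(\<Sum>c\<in>lab Jb. t c) = 0"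
    using enc_const_nonzero by (simp del: of_real_sum)
  have "contributes d 0 0"
    using d view fvec.subspace_0[OF subspace_C1] by (simp add: contributes_def)
  then have "1 \<le> t 0"
    by (simp add: t_def)
  also have "\<dots> \<le> (\<Sum>c\<in>lab Jb. t c)"
    by (rule member_le_sum[OF zero_in_lab]) (simp_all add: t_def finite_lab)
  finally show False
    using sum_zero by simp
qed

theorem secure_iff_conditions:
  "strongly_secure n L C2 f I J \<longleftrightarrow> complement_determines_I \<and> J_blind_to_I"
  using secure_if_conditions secure_imp_complement_determines_I secure_imp_J_blind_to_I by blast

section \<open>Dimensions of the punctured codes\<close>

definition ext :: "(nat \<Rightarrow> 'a) \<Rightarrow> nat \<Rightarrow> 'a" where
  "ext x = ext_vec n Ib x (secret x)"

lemma C1'_eq: "C1' n L I f = ext ` C1"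
proof (intro set_eqI iffI)
  fix v assume "v \<in> C1' n L I f"
  then obtain s x where "s \<in> lab {..<L}" "x \<in> f s" "v = ext_vec n Ib x s"
    by (auto simp: C1'_def)
  then show "v \<in> ext ` C1"
    by (auto simp: mem_f_iff ext_def)
next
  fix v assume "v \<in> ext ` C1"
  then obtain x where "x \<in> C1" "v = ext x"
    by blast
  then show "v \<in> C1' n L I f"
    unfolding C1'_def ext_def using secret_in_lab mem_f_secret by blast
qed

lemma C2'_eq: "C2' n L I f = ext ` C0"
proof (intro set_eqI iffI)
  fix v assume "v \<in> C2' n L I f"
  then obtain s x where "s \<in> lab {..<L}" "proj I s = 0" "x \<in> f s" "v = ext_vec n Ib x s"
    by (auto simp: C2'_def)
  then show "v \<in> ext ` C0"
    by (auto simp: mem_f_iff ext_def C0_def secret_I_def)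
next
  fix v assume "v \<in> ext ` C0"
  then obtain x where "x \<in> C1" "secret_I x = 0" "v = ext x"
    by (auto simp: C0_def)
  then show "v \<in> C2' n L I f"
    unfolding C2'_def ext_def secret_I_def using secret_in_lab mem_f_secret by blast
qed

lemma ext_add: "x \<in> C1 \<Longrightarrow> y \<in> C1 \<Longrightarrow> ext (x + y) = ext x + ext y"
  and ext_diff: "x \<in> C1 \<Longrightarrow> y \<in> C1 \<Longrightarrow> ext (x - y) = ext x - ext y"
  by (simp_all add: ext_def ext_vec_def secret_add secret_diff fun_eq_iff)

lemma ext_fscale: "x \<in> C1 \<Longrightarrow> ext (fscale c x) = fscale c (ext x)"
  unfolding ext_def by (simp add: secret_fscale) (simp add: ext_vec_def fscale_def fun_eq_iff)

lemma subspace_proj_ext: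
  assumes "fvec.subspace S" "S \<subseteq> C1"
  shows "fvec.subspace ((\<lambda>x. proj K (ext x)) ` S)" and "finite ((\<lambda>x. proj K (ext x)) ` S)"
proof -
  show "fvec.subspace ((\<lambda>x. proj K (ext x)) ` S)"
    using assms(2) by (intro subspace_image_linear_on[OF assms(1)])
      (auto simp: subset_iff ext_add ext_fscale proj_add proj_fscale)
  show "finite ((\<lambda>x. proj K (ext x)) ` S)"
    using assms(2) finite_C1 finite_subset by blast
qed

lemma proj_code_C1': "proj_code K (C1' n L I f) = (\<lambda>x. proj K (ext x)) ` C1"
  and proj_code_C2': "proj_code K (C2' n L I f) = (\<lambda>x. proj K (ext x)) ` C0"
  by (simp_all add: proj_code_def C1'_eq C2'_eq image_image)

lemma proj_J_ext: "proj J (ext x) = proj J x"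
  using J_subset by (auto simp: proj_def ext_def ext_vec_def fun_eq_iff)

lemma dim_proj_J_eq_iff:
  "int (fvec.dim (proj_code J (C1' n L I f))) - int (fvec.dim (proj_code J (C2' n L I f))) = 0
     \<longleftrightarrow> J_blind_to_I"
proof -
  have sub: "proj J ` C0 \<subseteq> proj J ` C1"
    using C0_subset_C1 by blast
  then have "card (proj J ` C1) = card (proj J ` C0) \<longleftrightarrow> proj J ` C1 = proj J ` C0"
    using card_subset_eq[OF finite_imageI[OF finite_C1] sub] by auto
  also have "\<dots> \<longleftrightarrow> J_blind_to_I"
    using sub by (auto simp: J_blind_to_I_def)
  finally show ?thesis
    using dim_diff_eq_iff_card[OF subspace_proj_ext[OF subspace_C0 C0_subset_C1, where K = J]
        subspace_proj_ext[OF subspace_C1 order_refl, where K = J], where k = 0]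
    by (simp add: proj_code_C1' proj_code_C2' proj_J_ext)
qed

abbreviation "complement_coords \<equiv> Jb \<union> (+) n ` Ib"

lemma proj_complement_ext_eq_0_iff:
  "proj complement_coords (ext x) = 0 \<longleftrightarrow> proj Jb x = 0 \<and> proj Ib (secret x) = 0"
proof -
  have coord: "proj complement_coords (ext x) k =
      (if k \<in> Jb then x k else if n \<le> k \<and> k - n \<in> Ib then secret x (k - n) else 0)" for k
    by (auto simp: proj_def ext_def ext_vec_def mem_shift_iff)
  show ?thesis
  proof
    assume h: "proj complement_coords (ext x) = 0"
    have "x k = 0" if "k \<in> Jb" for k
      using fun_cong[OF h, of k] that by (simp add: coord)
    moreover have "secret x i = 0" if "i \<in> Ib" for i
      using fun_cong[OF h, of "n + i"] that by (simp add: coord)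
    ultimately show "proj Jb x = 0 \<and> proj Ib (secret x) = 0"
      by (simp add: proj_def fun_eq_iff)
  next
    assume h: "proj Jb x = 0 \<and> proj Ib (secret x) = 0"
    have "x k = 0" if "k \<in> Jb" for k
      using fun_cong[OF conjunct1[OF h], of k] that by (simp add: proj_def)
    moreover have "secret x i = 0" if "i \<in> Ib" for i
      using fun_cong[OF conjunct2[OF h], of i] that by (simp add: proj_def)
    ultimately show "proj complement_coords (ext x) = 0"
      by (simp add: fun_eq_iff coord)
  qed
qed

lemma card_image_C1_eq_iff_kernels:
  fixes h :: "(nat \<Rightarrow> 'a) \<Rightarrow> 'b::ab_group_add"
  assumes hom: "\<And>x y. x \<in> C1 \<Longrightarrow> y \<in> C1 \<Longrightarrow> h (x - y) = h x - h y"
  shows "card (h ` C1) = CARD('a) ^ card I * card (h ` C0) \<longleftrightarrow>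
    {x \<in> C1. h x = 0} = {x \<in> C0. h x = 0}"
proof -
  define ker1 where "ker1 = {x \<in> C1. h x = 0}"
  define ker0 where "ker0 = {x \<in> C0. h x = 0}"
  have "card C1 = card (h ` C1) * card ker1"
    unfolding ker1_def using hom by (intro card_eq_card_image_mult_card_kernel[OF subspace_C1 finite_C1])
  moreover have "card C0 = card (h ` C0) * card ker0"
    unfolding ker0_def using hom C0_subset_C1
    by (intro card_eq_card_image_mult_card_kernel[OF subspace_C0 finite_C0]) auto
  ultimately have counts: "card (h ` C1) * card ker1 = CARD('a) ^ card I * card (h ` C0) * card ker0"
    using card_C1 by (simp add: mult.assoc)
  have "h 0 = 0"
    using hom[OF fvec.subspace_0[OF subspace_C1] fvec.subspace_0[OF subspace_C1]] by simp
  then have "0 \<in> ker0"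
    using fvec.subspace_0[OF subspace_C0] by (simp add: ker0_def)
  then have ker0: "card ker0 \<noteq> 0" and image0: "CARD('a) ^ card I * card (h ` C0) \<noteq> 0"
    using finite_C0 by (auto simp: ker0_def)
  have "card (h ` C1) = CARD('a) ^ card I * card (h ` C0) \<longleftrightarrow> card ker1 = card ker0"
  proof
    assume "card (h ` C1) = CARD('a) ^ card I * card (h ` C0)"
    then show "card ker1 = card ker0"
      using counts image0 by simp
  next
    assume "card ker1 = card ker0"
    then show "card (h ` C1) = CARD('a) ^ card I * card (h ` C0)"
      using counts ker0 by simp
  qed
  also have "\<dots> \<longleftrightarrow> ker1 = ker0"
  proof -
    have "finite ker1" "ker0 \<subseteq> ker1"
      using finite_C1 C0_subset_C1 by (auto simp: ker1_def ker0_def)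
    then show ?thesis
      using card_subset_eq by metis
  qed
  finally show ?thesis
    by (simp only: ker1_def ker0_def)
qed

lemma dim_proj_complement_eq_iff:
  "int (fvec.dim (proj_code complement_coords (C1' n L I f)))
     - int (fvec.dim (proj_code complement_coords (C2' n L I f))) = int (card I)
   \<longleftrightarrow> complement_determines_I"
proof -
  let ?h = "\<lambda>x. proj complement_coords (ext x)"
  have "card (?h ` C1) = CARD('a) ^ card I * card (?h ` C0) \<longleftrightarrow>
      {x \<in> C1. ?h x = 0} = {x \<in> C0. ?h x = 0}"
    by (rule card_image_C1_eq_iff_kernels) (simp add: ext_diff proj_diff)
  also have "\<dots> \<longleftrightarrow> complement_determines_I"
    by (auto simp: complement_determines_I_def C0_def proj_complement_ext_eq_0_iff)
  finally show ?thesis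
    using dim_diff_eq_iff_card[OF subspace_proj_ext[OF subspace_C0 C0_subset_C1, where K = complement_coords]
        subspace_proj_ext[OF subspace_C1 order_refl, where K = complement_coords], where k = "card I"]
    by (simp add: proj_code_C1' proj_code_C2')
qed

end

theorem proposition1:
  fixes C1 C2 :: "(nat \<Rightarrow> 'a::{finite,field}) set"
    and f :: "(nat \<Rightarrow> 'a) \<Rightarrow> (nat \<Rightarrow> 'a) set"
    and n L :: nat and I J :: "nat set"
  assumes "C1 \<subseteq> lab {..<n}" "fvec.subspace C1" "fvec.subspace C2"
    and "C2 \<subset> C1"
    and "fvec.dim C1 - fvec.dim C2 = L"
    and "quotient_iso L C1 C2 f"
    and "I \<subseteq> {..<L}" and "J \<subseteq> {..<n}"
  shows "strongly_secure n L C2 f I J \<longleftrightarrow>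
     int (fvec.dim (proj_code J (C1' n L I f))) - int (fvec.dim (proj_code J (C2' n L I f))) = 0 \<and>
     int (fvec.dim (proj_code (({..<n} - J) \<union> ((+) n ` ({..<L} - I))) (C1' n L I f)))
       - int (fvec.dim (proj_code (({..<n} - J) \<union> ((+) n ` ({..<L} - I))) (C2' n L I f)))
       = int (card I)"
proof -
  interpret ramp_scheme C1 C2 f n L I J
    using assms by unfold_locales auto
  show ?thesis
    using secure_iff_conditions dim_proj_J_eq_iff dim_proj_complement_eq_iff by blast
qed

end
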